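(* Let $0=t_0<\dots<t_N=T$, $\tau_k=t_k-t_{k-1}$, $r_k=\tau_k/\tau_{k-1}$ ($2\le k\le N$), with all $r_k>0$. Let $u(x,t)$ satisfy $\|\partial_t^ku(\cdot,t)\|\le\bar Ct^{\alpha-k}$ for $t\in(0,T]$, $k=1,2,3$, with $\bar C>0$ and $\frac12\le\alpha\le1$. Define the truncation error $\eta^n:=\mathcal D_2u(\cdot,t_n)-\partial_tu(\cdot,t_n)$, where $\mathcal D_2v^n=\sum_{k=1}^nb^{(n)}_{n-k}(v^k-v^{k-1})$ (so $\mathcal D_2v^1=(v^1-v^0)/\tau_1$ and, for $n\ge2$, $\mathcal D_2v^n=\frac{1+2r_n}{\tau_n(1+r_n)}(v^n-v^{n-1})-\frac{r_n^2}{\tau_n(1+r_n)}(v^{n-1}-v^{n-2})$). Then $$\|\eta^j\|\le2\bar C\tau_j^2t_{j-1}^{\alpha-3}+\tfrac12\bar C\tau_{j-1}^2t_{j-2}^{\alpha-3},\ j\ge3;\qquad \|\eta^2\|\le\big(2r_2^2+1/(2\alpha)\big)\bar C\tau_1^{\alpha-1};\qquad \|\eta^1\|\le\frac{\bar C}{\alpha}\tau_1^{\alpha-1}.$$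
   Context: BDF2 kernels: $b^{(1)}_0=1/\tau_1$; for $n\ge2$, $b^{(n)}_0=\frac{1+2r_n}{\tau_n(1+r_n)}$, $b^{(n)}_1=-\frac{r_n^2}{\tau_n(1+r_n)}$, $b^{(n)}_j=0$ for $j\ge2$. In the paper $\|\cdot\|$ is the discrete $L^2$ norm over interior spatial grid points, $\|v\|=(\sum_{i=1}^{M-1}hv_i^2)^{1/2}$. *)

theory Defs
  imports "HOL-Analysis.Analysis"
begin

definition dnorm :: "nat \<Rightarrow> real \<Rightarrow> (nat \<Rightarrow> real) \<Rightarrow> real" where
  "dnorm M h v = sqrt (\<Sum>i\<in>{1..M-1}. h * (v i)\<^sup>2)"

definition tau :: "(nat \<Rightarrow> real) \<Rightarrow> nat \<Rightarrow> real" where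
  "tau t k = t k - t (k - 1)"

definition ratio :: "(nat \<Rightarrow> real) \<Rightarrow> nat \<Rightarrow> real" where
  "ratio t k = tau t k / tau t (k - 1)"

definition bker :: "(nat \<Rightarrow> real) \<Rightarrow> nat \<Rightarrow> nat \<Rightarrow> real" where
  "bker t n j =
     (if n = 1 then (if j = 0 then 1 / tau t 1 else 0)
      else if j = 0 then (1 + 2 * ratio t n) / (tau t n * (1 + ratio t n))
      else if j = 1 then - ((ratio t n)\<^sup>2 / (tau t n * (1 + ratio t n)))
      else 0)"

definition D2 :: "(nat \<Rightarrow> real) \<Rightarrow> (nat \<Rightarrow> real) \<Rightarrow> nat \<Rightarrow> real" where
  "D2 t v n = (\<Sum>k=1..n. bker t n (n - k) * (v k - v (k - 1)))"

end

theory Submission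
  imports Defs
begin

(* The discrete-norm estimate is a scalar one in disguise. For the error vector E,
   dnorm E ^ 2 = <E, E> is the BDF2 truncation error of the scalar function U(s) = <E, u(., s)>,
   and by Cauchy-Schwarz U inherits the bounds |U^(k)(s)| <= dnorm E * Cb * s^(alpha - k);
   a scalar bound dnorm E * Cb * B therefore yields dnorm E <= Cb * B.

   For the scalar bounds: BDF2 differentiates quadratics exactly, so for n >= 3 its error is a
   combination of Taylor remainders at t(n-1), with |U'''| evaluated at the left end of each
   step. Near t = 0 only first-order information is usable: U(s) - U(0) - s U'(s) has
   derivative -s U''(s), of size at most Cb s^(alpha - 1), which gives the case n = 1. For n = 2,
   the part of the error coming from [t1, t2] has Peano kernel a (t2 - s) - 1 of modulus at most 1,
   and the rest is the remainder of the case n = 1. *)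

lemma taylor1_bound:
  fixes V V1 V2 :: "real \<Rightarrow> real"
  assumes "p < q" and "continuous_on {p..q} V" "continuous_on {p..q} V1"
    and "\<And>x. p < x \<Longrightarrow> x < q \<Longrightarrow> (V has_real_derivative V1 x) (at x)"
    and "\<And>x. p < x \<Longrightarrow> x < q \<Longrightarrow> (V1 has_real_derivative V2 x) (at x)"
    and "\<And>x. p < x \<Longrightarrow> x < q \<Longrightarrow> \<bar>V2 x\<bar> \<le> B"
  shows "\<bar>V q - V p - (q - p) * V1 p\<bar> \<le> B * (q - p)\<^sup>2 / 2"
proof -
  let ?f = "\<lambda>y. V y + (q - y) * V1 y" and ?g = "\<lambda>y. - B * (q - y)\<^sup>2 / 2"
  have "norm (?f q - ?f p) \<le> ?g q - ?g p"
  proof (rule differentiable_bound_general[OF \<open>p < q\<close>])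
    show "continuous_on {p..q} ?f" "continuous_on {p..q} ?g"
      using assms(2,3) by (auto intro!: continuous_intros)
    fix x assume x: "p < x" "x < q"
    show "(?f has_vector_derivative (q - x) * V2 x) (at x)"
      unfolding has_real_derivative_iff_has_vector_derivative[symmetric]
      by (rule derivative_eq_intros assms(4,5)[OF x] refl | simp add: field_simps)+
    show "(?g has_vector_derivative B * (q - x)) (at x)"
      unfolding has_real_derivative_iff_has_vector_derivative[symmetric]
      by (rule derivative_eq_intros refl | simp add: field_simps)+
    show "norm ((q - x) * V2 x) \<le> B * (q - x)"
      using assms(6)[OF x] x by (simp add: abs_mult mult.commute mult_left_mono)
  qed
  then show ?thesis by (simp add: algebra_simps)
qed

lemma taylor1_weighted_bound:
  fixes V V1 V2 :: "real \<Rightarrow> real"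
  assumes "p < q" and a: "0 \<le> a" "a * (q - p) \<le> 2"
    and "continuous_on {p..q} V" "continuous_on {p..q} V1"
    and "\<And>x. p < x \<Longrightarrow> x < q \<Longrightarrow> (V has_real_derivative V1 x) (at x)"
    and "\<And>x. p < x \<Longrightarrow> x < q \<Longrightarrow> (V1 has_real_derivative V2 x) (at x)"
    and "\<And>x. p < x \<Longrightarrow> x < q \<Longrightarrow> \<bar>V2 x\<bar> \<le> B"
  shows "\<bar>a * (V q - V p - (q - p) * V1 p) - (V1 q - V1 p)\<bar> \<le> B * (q - p)"
proof -
  let ?f = "\<lambda>y. a * (V y + (q - y) * V1 y) - V1 y"
  have "norm (?f q - ?f p) \<le> B * q - B * p"
  proof (rule differentiable_bound_general[OF \<open>p < q\<close>])
    show "continuous_on {p..q} ?f" "continuous_on {p..q} (\<lambda>y. B * y)"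
      using assms(4,5) by (auto intro!: continuous_intros)
    fix x assume x: "p < x" "x < q"
    show "(?f has_vector_derivative (a * (q - x) - 1) * V2 x) (at x)"
      unfolding has_real_derivative_iff_has_vector_derivative[symmetric]
      by (rule derivative_eq_intros assms(6,7)[OF x] refl | simp add: algebra_simps)+
    show "((\<lambda>y. B * y) has_vector_derivative B) (at x)"
      unfolding has_real_derivative_iff_has_vector_derivative[symmetric]
      by (rule derivative_eq_intros refl | simp)+
    have "a * (q - x) \<le> a * (q - p)"
      using x a(1) by (intro mult_left_mono) auto
    then have "\<bar>a * (q - x) - 1\<bar> \<le> 1"
      using x a by (simp add: abs_le_iff)
    then show "norm ((a * (q - x) - 1) * V2 x) \<le> B"
      using mult_mono[OF _ assms(8)[OF x]] by (fastforce simp: abs_mult)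
  qed
  then show ?thesis
    by (simp add: algebra_simps)
qed

lemma taylor2_bound:
  fixes V V1 V2 V3 :: "real \<Rightarrow> real"
  assumes "p < q" and "continuous_on {p..q} V" "continuous_on {p..q} V1" "continuous_on {p..q} V2"
    and "\<And>x. p < x \<Longrightarrow> x < q \<Longrightarrow> (V has_real_derivative V1 x) (at x)"
    and "\<And>x. p < x \<Longrightarrow> x < q \<Longrightarrow> (V1 has_real_derivative V2 x) (at x)"
    and "\<And>x. p < x \<Longrightarrow> x < q \<Longrightarrow> (V2 has_real_derivative V3 x) (at x)"
    and "\<And>x. p < x \<Longrightarrow> x < q \<Longrightarrow> \<bar>V3 x\<bar> \<le> B"
  shows "\<bar>V q - V p - (q - p) * V1 p - (q - p)\<^sup>2 / 2 * V2 p\<bar> \<le> B * (q - p) ^ 3 / 6"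
proof -
  let ?f = "\<lambda>y. V y + (q - y) * V1 y + (q - y)\<^sup>2 / 2 * V2 y" and ?g = "\<lambda>y. - B * (q - y) ^ 3 / 6"
  have "norm (?f q - ?f p) \<le> ?g q - ?g p"
  proof (rule differentiable_bound_general[OF \<open>p < q\<close>])
    show "continuous_on {p..q} ?f" "continuous_on {p..q} ?g"
      using assms(2-4) by (auto intro!: continuous_intros)
    fix x assume x: "p < x" "x < q"
    show "(?f has_vector_derivative (q - x)\<^sup>2 / 2 * V3 x) (at x)"
      unfolding has_real_derivative_iff_has_vector_derivative[symmetric]
      by (rule derivative_eq_intros assms(5-7)[OF x] refl | simp add: field_simps power2_eq_square)+
    show "(?g has_vector_derivative B * (q - x)\<^sup>2 / 2) (at x)"
      unfolding has_real_derivative_iff_has_vector_derivative[symmetric]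
      by (rule derivative_eq_intros refl | simp add: field_simps power2_eq_square)+
    show "norm ((q - x)\<^sup>2 / 2 * V3 x) \<le> B * (q - x)\<^sup>2 / 2"
      using mult_left_mono[OF assms(8)[OF x] zero_le_power2[of "q - x"]]
      by (simp add: abs_mult mult.commute)
  qed
  then show ?thesis by (simp add: algebra_simps)
qed

lemma taylor2_bound_left:
  fixes V V1 V2 V3 :: "real \<Rightarrow> real"
  assumes "p < q" and "continuous_on {p..q} V" "continuous_on {p..q} V1" "continuous_on {p..q} V2"
    and "\<And>x. p < x \<Longrightarrow> x < q \<Longrightarrow> (V has_real_derivative V1 x) (at x)"
    and "\<And>x. p < x \<Longrightarrow> x < q \<Longrightarrow> (V1 has_real_derivative V2 x) (at x)"
    and "\<And>x. p < x \<Longrightarrow> x < q \<Longrightarrow> (V2 has_real_derivative V3 x) (at x)"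
    and "\<And>x. p < x \<Longrightarrow> x < q \<Longrightarrow> \<bar>V3 x\<bar> \<le> B"
  shows "\<bar>V p - V q + (q - p) * V1 q - (q - p)\<^sup>2 / 2 * V2 q\<bar> \<le> B * (q - p) ^ 3 / 6"
proof -
  let ?f = "\<lambda>y. V y + (p - y) * V1 y + (p - y)\<^sup>2 / 2 * V2 y" and ?g = "\<lambda>y. B * (y - p) ^ 3 / 6"
  have "norm (?f q - ?f p) \<le> ?g q - ?g p"
  proof (rule differentiable_bound_general[OF \<open>p < q\<close>])
    show "continuous_on {p..q} ?f" "continuous_on {p..q} ?g"
      using assms(2-4) by (auto intro!: continuous_intros)
    fix x assume x: "p < x" "x < q"
    show "(?f has_vector_derivative (p - x)\<^sup>2 / 2 * V3 x) (at x)"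
      unfolding has_real_derivative_iff_has_vector_derivative[symmetric]
      by (rule derivative_eq_intros assms(5-7)[OF x] refl | simp add: field_simps power2_eq_square)+
    show "(?g has_vector_derivative B * (x - p)\<^sup>2 / 2) (at x)"
      unfolding has_real_derivative_iff_has_vector_derivative[symmetric]
      by (rule derivative_eq_intros refl | simp add: field_simps power2_eq_square)+
    show "norm ((p - x)\<^sup>2 / 2 * V3 x) \<le> B * (x - p)\<^sup>2 / 2"
      using mult_left_mono[OF assms(8)[OF x] zero_le_power2[of "x - p"]]
      by (simp add: abs_mult mult.commute power2_commute)
  qed
  then show ?thesis by (simp add: algebra_simps abs_minus_commute power2_commute)
qed

definition weakly_singular ::
  "real \<Rightarrow> real \<Rightarrow> real \<Rightarrow> (real \<Rightarrow> real) \<Rightarrow> (real \<Rightarrow> real) \<Rightarrow> (real \<Rightarrow> real) \<Rightarrow> (real \<Rightarrow> real) \<Rightarrow> bool"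
where
  "weakly_singular T \<alpha> C U U1 U2 U3 \<longleftrightarrow>
     continuous_on {0..T} U \<and>
     (\<forall>s\<in>{0<..T}.
        (U has_real_derivative U1 s) (at s within {0<..T}) \<and>
        (U1 has_real_derivative U2 s) (at s within {0<..T}) \<and>
        (U2 has_real_derivative U3 s) (at s within {0<..T}) \<and>
        \<bar>U1 s\<bar> \<le> C * s powr (\<alpha> - 1) \<and> \<bar>U2 s\<bar> \<le> C * s powr (\<alpha> - 2) \<and>
        \<bar>U3 s\<bar> \<le> C * s powr (\<alpha> - 3))"

lemma weakly_singular_has_real_derivative:
  assumes "weakly_singular T \<alpha> C U U1 U2 U3" "0 < s" "s < T"
  shows "(U has_real_derivative U1 s) (at s)" "(U1 has_real_derivative U2 s) (at s)"
    "(U2 has_real_derivative U3 s) (at s)"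
proof -
  have "s \<in> {0<..T}" and at: "at s within {0<..T} = at s"
    using assms(2,3) by (auto intro: at_within_interior)
  with assms(1) have "(U has_real_derivative U1 s) (at s within {0<..T})"
    "(U1 has_real_derivative U2 s) (at s within {0<..T})"
    "(U2 has_real_derivative U3 s) (at s within {0<..T})"
    unfolding weakly_singular_def by blast+
  then show "(U has_real_derivative U1 s) (at s)" "(U1 has_real_derivative U2 s) (at s)"
    "(U2 has_real_derivative U3 s) (at s)"
    by (simp_all only: at)
qed

lemma weakly_singular_continuous_on:
  assumes "weakly_singular T \<alpha> C U U1 U2 U3" "0 < p" "q \<le> T"
  shows "continuous_on {p..q} U" "continuous_on {p..q} U1" "continuous_on {p..q} U2"
proof -
  have "continuous_on {0<..T} U1" "continuous_on {0<..T} U2"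
    using assms(1) unfolding weakly_singular_def continuous_on_eq_continuous_within
    by (auto intro: DERIV_continuous)
  moreover have "continuous_on {0..T} U"
    using assms(1) unfolding weakly_singular_def by simp
  moreover have "{p..q} \<subseteq> {0<..T}" "{p..q} \<subseteq> {0..T}"
    using assms(2,3) by auto
  ultimately show "continuous_on {p..q} U" "continuous_on {p..q} U1" "continuous_on {p..q} U2"
    by (auto intro: continuous_on_subset)
qed

lemma weakly_singular_const_nonneg:
  assumes "weakly_singular T \<alpha> C U U1 U2 U3" "0 < T"
  shows "0 \<le> C"
proof -
  have "0 \<le> C * T powr (\<alpha> - 1)"
    using assms unfolding weakly_singular_def
    by (meson abs_ge_zero greaterThanAtMost_iff order.refl order_trans)
  then show ?thesis
    using assms(2) by (simp add: zero_le_mult_iff)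
qed

lemma weakly_singular_abs_le:
  assumes ws: "weakly_singular T \<alpha> C U U1 U2 U3" and "\<alpha> \<le> 1" "0 < p" "p \<le> s" "s \<le> T"
  shows "\<bar>U2 s\<bar> \<le> C * p powr (\<alpha> - 2)" "\<bar>U3 s\<bar> \<le> C * p powr (\<alpha> - 3)"
proof -
  have "0 \<le> C"
    using weakly_singular_const_nonneg[OF ws] assms by simp
  moreover have "s powr (\<alpha> - 2) \<le> p powr (\<alpha> - 2)" "s powr (\<alpha> - 3) \<le> p powr (\<alpha> - 3)"
    using assms by (auto intro: powr_mono2')
  moreover have "\<bar>U2 s\<bar> \<le> C * s powr (\<alpha> - 2)" "\<bar>U3 s\<bar> \<le> C * s powr (\<alpha> - 3)"
    using assms unfolding weakly_singular_def by auto
  ultimately show "\<bar>U2 s\<bar> \<le> C * p powr (\<alpha> - 2)" "\<bar>U3 s\<bar> \<le> C * p powr (\<alpha> - 3)"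
    by (meson mult_left_mono order_trans)+
qed

lemma weakly_singular_taylor_bounds:
  assumes ws: "weakly_singular T \<alpha> C U U1 U2 U3" and \<alpha>: "\<alpha> \<le> 1"
    and pq: "0 < p" "p < q" "q \<le> T"
  shows "\<bar>U q - U p - (q - p) * U1 p - (q - p)\<^sup>2 / 2 * U2 p\<bar> \<le> C * p powr (\<alpha> - 3) * (q - p) ^ 3 / 6"
    and "\<bar>U p - U q + (q - p) * U1 q - (q - p)\<^sup>2 / 2 * U2 q\<bar> \<le> C * p powr (\<alpha> - 3) * (q - p) ^ 3 / 6"
    and "\<bar>U1 q - U1 p - (q - p) * U2 p\<bar> \<le> C * p powr (\<alpha> - 3) * (q - p)\<^sup>2 / 2"
    and "0 \<le> a \<Longrightarrow> a * (q - p) \<le> 2 \<Longrightarrow>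
      \<bar>a * (U q - U p - (q - p) * U1 p) - (U1 q - U1 p)\<bar> \<le> C * p powr (\<alpha> - 2) * (q - p)"
proof -
  note cont = weakly_singular_continuous_on[OF ws pq(1,3)]
  have D: "(U has_real_derivative U1 x) (at x)" "(U1 has_real_derivative U2 x) (at x)"
    "(U2 has_real_derivative U3 x) (at x)" if "p < x" "x < q" for x
    using weakly_singular_has_real_derivative[OF ws, of x] pq that by auto
  have B: "\<bar>U2 x\<bar> \<le> C * p powr (\<alpha> - 2)" "\<bar>U3 x\<bar> \<le> C * p powr (\<alpha> - 3)" if "p < x" "x < q" for x
    using weakly_singular_abs_le[OF ws \<alpha> pq(1), of x] pq that by auto
  show "\<bar>U q - U p - (q - p) * U1 p - (q - p)\<^sup>2 / 2 * U2 p\<bar> \<le> C * p powr (\<alpha> - 3) * (q - p) ^ 3 / 6"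
    by (rule taylor2_bound[OF pq(2) cont D B(2)])
  show "\<bar>U p - U q + (q - p) * U1 q - (q - p)\<^sup>2 / 2 * U2 q\<bar> \<le> C * p powr (\<alpha> - 3) * (q - p) ^ 3 / 6"
    by (rule taylor2_bound_left[OF pq(2) cont D B(2)])
  show "\<bar>U1 q - U1 p - (q - p) * U2 p\<bar> \<le> C * p powr (\<alpha> - 3) * (q - p)\<^sup>2 / 2"
    by (rule taylor1_bound[OF pq(2) cont(2,3) D(2,3) B(2)])
  show "\<bar>a * (U q - U p - (q - p) * U1 p) - (U1 q - U1 p)\<bar> \<le> C * p powr (\<alpha> - 2) * (q - p)"
    if "0 \<le> a" "a * (q - p) \<le> 2"
    by (rule taylor1_weighted_bound[OF pq(2) that cont(1,2) D(1,2) B(1)])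
qed

lemma weakly_singular_continuous_on_times_deriv:
  assumes ws: "weakly_singular T \<alpha> C U U1 U2 U3" and "0 < \<alpha>" "0 < T"
  shows "continuous_on {0..T} (\<lambda>y. y * U1 y)"
proof (rule continuous_on_IccI)
  have "\<forall>\<^sub>F y in at_right 0. norm (y * U1 y) \<le> C * y powr \<alpha>"
    using eventually_at_right_real[OF \<open>0 < T\<close>]
  proof (rule eventually_mono)
    fix y :: real assume y: "y \<in> {0<..<T}"
    then have "\<bar>U1 y\<bar> \<le> C * y powr (\<alpha> - 1)"
      using ws unfolding weakly_singular_def by auto
    then have "\<bar>y * U1 y\<bar> \<le> y * (C * y powr (\<alpha> - 1))"
      using y by (simp add: abs_mult mult_left_mono)
    also have "\<dots> = C * y powr \<alpha>"
      using y by (simp add: powr_mult_base)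
    finally show "norm (y * U1 y) \<le> C * y powr \<alpha>" by simp
  qed
  moreover have "((\<lambda>y. C * y powr \<alpha>) \<longlongrightarrow> 0) (at_right 0)"
    using \<open>0 < \<alpha>\<close> by (auto intro!: tendsto_mult_right_zero tendsto_zero_powrI
        simp: eventually_at_filter)
  ultimately show "((\<lambda>y. y * U1 y) \<longlongrightarrow> 0 * U1 0) (at_right 0)"
    by (simp add: Lim_null_comparison)
  have "continuous_on {T/2..T} (\<lambda>y. y * U1 y)"
    using weakly_singular_continuous_on(2)[OF ws] \<open>0 < T\<close> by (auto intro!: continuous_intros)
  then show "((\<lambda>y. y * U1 y) \<longlongrightarrow> T * U1 T) (at_left T)"
    using \<open>0 < T\<close> by (auto intro: continuous_on_Icc_at_leftD)
  fix y assume "0 < y" "y < T"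
  then have "isCont U1 y"
    by (rule DERIV_isCont[OF weakly_singular_has_real_derivative(2)[OF ws]])
  then have "isCont (\<lambda>y. y * U1 y) y"
    by (intro continuous_intros)
  then show "(\<lambda>y. y * U1 y) \<midarrow>y\<rightarrow> y * U1 y"
    by (simp add: isCont_def)
qed (rule \<open>0 < T\<close>)

lemma weakly_singular_taylor1_bound_at_0:
  assumes ws: "weakly_singular T \<alpha> C U U1 U2 U3" and "0 < \<alpha>" "0 < s" "s \<le> T"
  shows "\<bar>U s - U 0 - s * U1 s\<bar> \<le> C / \<alpha> * s powr \<alpha>"
proof -
  let ?f = "\<lambda>y. U y - y * U1 y" and ?g = "\<lambda>y. C / \<alpha> * y powr \<alpha>"
  have "norm (?f s - ?f 0) \<le> ?g s - ?g 0"
  proof (rule differentiable_bound_general[OF \<open>0 < s\<close>])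
    have "continuous_on {0..T} ?f"
      using ws weakly_singular_continuous_on_times_deriv[OF ws] assms
      unfolding weakly_singular_def by (auto intro!: continuous_intros)
    then show "continuous_on {0..s} ?f"
      by (rule continuous_on_subset) (use assms in auto)
    show "continuous_on {0..s} ?g"
      by (intro continuous_on_mult continuous_on_const continuous_on_powr' continuous_on_id)
        (use \<open>0 < \<alpha>\<close> in auto)
    fix y assume y: "0 < y" "y < s"
    then have "y < T" using assms by simp
    show "(?f has_vector_derivative - (y * U2 y)) (at y)"
      unfolding has_real_derivative_iff_has_vector_derivative[symmetric]
      by (rule derivative_eq_intros weakly_singular_has_real_derivative[OF ws \<open>0 < y\<close> \<open>y < T\<close>] refl
          | simp add: field_simps)+
    show "(?g has_vector_derivative C * y powr (\<alpha> - 1)) (at y)"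
      unfolding has_real_derivative_iff_has_vector_derivative[symmetric]
      using y \<open>0 < \<alpha>\<close> by (auto intro!: derivative_eq_intros simp: field_simps powr_diff)
    have "\<bar>U2 y\<bar> \<le> C * y powr (\<alpha> - 2)"
      using ws y \<open>y < T\<close> unfolding weakly_singular_def by auto
    then have "\<bar>y * U2 y\<bar> \<le> y * (C * y powr (\<alpha> - 2))"
      using y by (simp add: abs_mult mult_left_mono)
    also have "\<dots> = C * y powr (\<alpha> - 1)"
      using y by (simp add: powr_mult_base)
    finally show "norm (- (y * U2 y)) \<le> C * y powr (\<alpha> - 1)" by simp
  qed
  then show ?thesis using \<open>0 < \<alpha>\<close> by simp
qed

text \<open>The last two identities say that BDF2 differentiates linear and quadratic functions exactly.\<close>

lemma bdf2_coefficients: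
  fixes \<tau> \<sigma> :: real
  assumes "0 < \<tau>" "0 < \<sigma>"
  defines "r \<equiv> \<tau> / \<sigma>"
  defines "a \<equiv> (1 + 2 * r) / (\<tau> * (1 + r))" and "b \<equiv> r\<^sup>2 / (\<tau> * (1 + r))"
  shows "0 \<le> a" "0 \<le> b" "a * \<tau> \<le> 2" "b * \<sigma> = r / (1 + r)"
    "a * \<tau> - b * \<sigma> = 1" "a * \<tau>\<^sup>2 / 2 + b * \<sigma>\<^sup>2 / 2 = \<tau>"
proof -
  have "0 < r"
    using assms(1,2) by (simp add: r_def)
  moreover have "\<sigma> = \<tau> / r"
    using assms(1,2) by (simp add: r_def)
  ultimately have r: "0 < r" "0 < 1 + r" "\<sigma> = \<tau> / r"
    by simp_all
  have a\<tau>: "a * \<tau> = (1 + 2 * r) / (1 + r)"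
    using assms(1) by (simp add: a_def)
  show b\<sigma>: "b * \<sigma> = r / (1 + r)"
    using assms(1) r by (simp add: b_def power2_eq_square)
  show "0 \<le> a" "0 \<le> b"
    using assms(1) r(1) by (simp_all add: a_def b_def)
  show "a * \<tau> \<le> 2"
    unfolding a\<tau> using r(2) by (simp add: field_simps)
  show "a * \<tau> - b * \<sigma> = 1"
    unfolding a\<tau> b\<sigma> using r(2) by (simp add: diff_divide_distrib[symmetric])
  have "a * \<tau>\<^sup>2 / 2 + b * \<sigma>\<^sup>2 / 2 = (a * \<tau>) * \<tau> / 2 + (b * \<sigma>) * (\<tau> / r) / 2"
    using r by (simp add: power2_eq_square)
  also have "\<dots> = \<tau>"
    unfolding a\<tau> b\<sigma> using r(1) by (simp add: divide_simps) (simp add: algebra_simps)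
  finally show "a * \<tau>\<^sup>2 / 2 + b * \<sigma>\<^sup>2 / 2 = \<tau>" .
qed

lemma first_step_factor_le:
  fixes r \<alpha> :: real
  assumes "0 < r" "1/2 \<le> \<alpha>" "\<alpha> \<le> 1"
  shows "r + r / ((1 + r) * \<alpha>) \<le> 2 * r\<^sup>2 + 1 / (2 * \<alpha>)"
proof -
  \<comment> \<open>After clearing denominators the claim is affine in \<open>\<alpha>\<close>: a convex combination of its
    values at \<open>\<alpha> = 1/2\<close> and \<open>\<alpha> = 1\<close>, both visibly nonnegative.\<close>
  have "0 \<le> \<alpha> * ((2 - 2 * \<alpha>) * (2 * r ^ 3 + (r - 1)\<^sup>2)
                   + (2 * \<alpha> - 1) * ((2 * r - 1)\<^sup>2 * (r + 1) + 2 * r\<^sup>2))"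
    using assms by (intro add_nonneg_nonneg mult_nonneg_nonneg) auto
  moreover have "0 < \<alpha> * (1 + r)"
    using assms by simp
  ultimately show ?thesis
    using assms by (simp add: field_simps power2_eq_square power3_eq_cube)
qed

lemma bdf2_first_step_bound:
  assumes ws: "weakly_singular T \<alpha> C U U1 U2 U3" and \<alpha>: "1/2 \<le> \<alpha>" "\<alpha> \<le> 1"
    and t: "0 < t1" "t1 < t2" "t2 \<le> T"
  defines "\<tau> \<equiv> t2 - t1"
  defines "r \<equiv> \<tau> / t1"
  shows "\<bar>(1 + 2 * r) / (\<tau> * (1 + r)) * (U t2 - U t1) - r\<^sup>2 / (\<tau> * (1 + r)) * (U t1 - U 0) - U1 t2\<bar>
    \<le> C * ((2 * r\<^sup>2 + 1 / (2 * \<alpha>)) * t1 powr (\<alpha> - 1))"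
proof -
  define a where "a = (1 + 2 * r) / (\<tau> * (1 + r))"
  define b where "b = r\<^sup>2 / (\<tau> * (1 + r))"
  have "0 < \<tau>" "0 < r"
    using t by (simp_all add: \<tau>_def r_def)
  note coeff = bdf2_coefficients[OF \<open>0 < \<tau>\<close> t(1), folded r_def, folded a_def b_def]
  have "0 \<le> C"
    using weakly_singular_const_nonneg[OF ws] t by simp
  let ?K = "a * (U t2 - U t1 - \<tau> * U1 t1) - (U1 t2 - U1 t1)"
  let ?R = "U t1 - U 0 - t1 * U1 t1"
  have K: "\<bar>?K\<bar> \<le> C * t1 powr (\<alpha> - 2) * \<tau>"
    using weakly_singular_taylor_bounds(4)[OF ws \<alpha>(2) t] coeff(1,3) by (simp add: \<tau>_def)
  have R: "\<bar>?R\<bar> \<le> C / \<alpha> * t1 powr \<alpha>"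
    using weakly_singular_taylor1_bound_at_0[OF ws _ t(1)] \<alpha> t by simp
  have "a * (U t2 - U t1) - b * (U t1 - U 0) - U1 t2 = ?K - b * ?R + (a * \<tau> - b * t1 - 1) * U1 t1"
    by (simp add: algebra_simps)
  then have "a * (U t2 - U t1) - b * (U t1 - U 0) - U1 t2 = ?K - b * ?R"
    using coeff(5) by simp
  then have "\<bar>a * (U t2 - U t1) - b * (U t1 - U 0) - U1 t2\<bar> \<le> \<bar>?K\<bar> + b * \<bar>?R\<bar>"
    using abs_triangle_ineq4[of ?K "b * ?R"] coeff(2) by (simp add: abs_mult)
  also have "\<dots> \<le> C * t1 powr (\<alpha> - 2) * \<tau> + b * (C / \<alpha> * t1 powr \<alpha>)"
    using K R coeff(2) by (intro add_mono mult_left_mono)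
  also have "\<dots> = C * t1 powr (\<alpha> - 1) * (r + (b * t1) / \<alpha>)"
  proof -
    have "t1 powr \<alpha> = t1 * t1 powr (\<alpha> - 1)" "t1 powr (\<alpha> - 1) = t1 * t1 powr (\<alpha> - 2)"
      using t(1) by (simp_all add: powr_mult_base)
    moreover have "\<tau> = r * t1"
      using t(1) by (simp add: r_def)
    ultimately show ?thesis
      by (simp add: algebra_simps)
  qed
  also have "\<dots> \<le> C * t1 powr (\<alpha> - 1) * (2 * r\<^sup>2 + 1 / (2 * \<alpha>))"
    using first_step_factor_le[OF \<open>0 < r\<close> \<alpha>] \<open>0 \<le> C\<close> coeff(4)
    by (intro mult_left_mono) (auto simp: mult.commute)
  finally show ?thesis
    unfolding a_def b_def by (simp add: mult_ac)
qed

lemma bdf2_step_bound: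
  assumes ws: "weakly_singular T \<alpha> C U U1 U2 U3" and \<alpha>: "\<alpha> \<le> 1"
    and t: "0 < p" "p < q" "q < s" "s \<le> T"
  defines "\<sigma> \<equiv> q - p" and "\<tau> \<equiv> s - q"
  defines "r \<equiv> \<tau> / \<sigma>"
  shows "\<bar>(1 + 2 * r) / (\<tau> * (1 + r)) * (U s - U q) - r\<^sup>2 / (\<tau> * (1 + r)) * (U q - U p) - U1 s\<bar>
    \<le> C * (2 * \<tau>\<^sup>2 * q powr (\<alpha> - 3) + 1/2 * \<sigma>\<^sup>2 * p powr (\<alpha> - 3))"
proof -
  define a where "a = (1 + 2 * r) / (\<tau> * (1 + r))"
  define b where "b = r\<^sup>2 / (\<tau> * (1 + r))"
  have "0 < \<tau>" "0 < \<sigma>"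
    using t by (simp_all add: \<tau>_def \<sigma>_def)
  note coeff = bdf2_coefficients[OF this, folded r_def, folded a_def b_def]
  have "0 < r"
    using \<open>0 < \<tau>\<close> \<open>0 < \<sigma>\<close> by (simp add: r_def)
  then have "b * \<sigma> \<le> 1"
    unfolding coeff(4) by simp
  define M where "M = C * q powr (\<alpha> - 3)"
  define M' where "M' = C * p powr (\<alpha> - 3)"
  have "0 \<le> M" "0 \<le> M'"
    using weakly_singular_const_nonneg[OF ws] t by (simp_all add: M_def M'_def)
  let ?Rs = "U s - U q - \<tau> * U1 q - \<tau>\<^sup>2 / 2 * U2 q"
  let ?R1 = "U1 s - U1 q - \<tau> * U2 q"
  let ?Rp = "U p - U q + \<sigma> * U1 q - \<sigma>\<^sup>2 / 2 * U2 q"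
  have right: "\<bar>?Rs\<bar> \<le> M * \<tau> ^ 3 / 6" "\<bar>?R1\<bar> \<le> M * \<tau>\<^sup>2 / 2"
    using weakly_singular_taylor_bounds(1,3)[OF ws \<alpha> _ t(3,4)] t by (simp_all add: M_def \<tau>_def)
  have left: "\<bar>?Rp\<bar> \<le> M' * \<sigma> ^ 3 / 6"
    using weakly_singular_taylor_bounds(2)[OF ws \<alpha> t(1,2)] t by (simp add: M'_def \<sigma>_def)
  have "a * (U s - U q) - b * (U q - U p) - U1 s
      = a * ?Rs + b * ?Rp - ?R1 + (a * \<tau> - b * \<sigma> - 1) * U1 q
        + (a * \<tau>\<^sup>2 / 2 + b * \<sigma>\<^sup>2 / 2 - \<tau>) * U2 q"
    by (simp add: algebra_simps)
  then have eq: "a * (U s - U q) - b * (U q - U p) - U1 s = a * ?Rs + b * ?Rp - ?R1"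
    using coeff(5,6) by simp
  have "\<bar>a * ?Rs\<bar> = a * \<bar>?Rs\<bar>" "\<bar>b * ?Rp\<bar> = b * \<bar>?Rp\<bar>"
    using coeff(1,2) by (simp_all add: abs_mult)
  then have "\<bar>a * (U s - U q) - b * (U q - U p) - U1 s\<bar> \<le> a * \<bar>?Rs\<bar> + b * \<bar>?Rp\<bar> + \<bar>?R1\<bar>"
    unfolding eq using abs_triangle_ineq[of "a * ?Rs" "b * ?Rp"] abs_triangle_ineq4[of "a * ?Rs + b * ?Rp" ?R1]
    by linarith
  also have "\<dots> \<le> a * (M * \<tau> ^ 3 / 6) + b * (M' * \<sigma> ^ 3 / 6) + M * \<tau>\<^sup>2 / 2"
    using right left coeff(1,2) by (intro add_mono mult_left_mono)
  also have "\<dots> = (a * \<tau>) * (M * \<tau>\<^sup>2 / 6) + (b * \<sigma>) * (M' * \<sigma>\<^sup>2 / 6) + M * \<tau>\<^sup>2 / 2"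
    by (simp add: power2_eq_square power3_eq_cube mult_ac)
  also have "\<dots> \<le> 2 * (M * \<tau>\<^sup>2 / 6) + 1 * (M' * \<sigma>\<^sup>2 / 6) + M * \<tau>\<^sup>2 / 2"
    using coeff(3) \<open>b * \<sigma> \<le> 1\<close> \<open>0 \<le> M\<close> \<open>0 \<le> M'\<close> by (intro add_mono mult_right_mono) auto
  also have "\<dots> \<le> 2 * (M * \<tau>\<^sup>2) + 1/2 * (M' * \<sigma>\<^sup>2)"
    using mult_nonneg_nonneg[OF \<open>0 \<le> M\<close> zero_le_power2[of \<tau>]]
      mult_nonneg_nonneg[OF \<open>0 \<le> M'\<close> zero_le_power2[of \<sigma>]] by linarith
  also have "\<dots> = C * (2 * \<tau>\<^sup>2 * q powr (\<alpha> - 3) + 1/2 * \<sigma>\<^sup>2 * p powr (\<alpha> - 3))"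
    by (simp add: M_def M'_def algebra_simps)
  finally show ?thesis
    unfolding a_def b_def .
qed

definition dinner :: "nat \<Rightarrow> real \<Rightarrow> (nat \<Rightarrow> real) \<Rightarrow> (nat \<Rightarrow> real) \<Rightarrow> real" where
  "dinner M h v w = (\<Sum>i\<in>{1..M-1}. h * v i * w i)"

lemma dnorm_nonneg: "0 \<le> h \<Longrightarrow> 0 \<le> dnorm M h v"
  unfolding dnorm_def by (simp add: sum_nonneg)

lemma dinner_self:
  assumes "0 \<le> h"
  shows "dinner M h v v = (dnorm M h v)\<^sup>2"
proof -
  have "0 \<le> (\<Sum>i\<in>{1..M-1}. h * (v i)\<^sup>2)"
    using assms by (intro sum_nonneg) auto
  then show ?thesis
    unfolding dinner_def dnorm_def by (simp add: power2_eq_square mult.assoc)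
qed

lemma dinner_abs_le:
  assumes "0 \<le> h"
  shows "\<bar>dinner M h v w\<bar> \<le> dnorm M h v * dnorm M h w"
proof -
  have "\<bar>sqrt h * x\<bar> * \<bar>sqrt h * y\<bar> = \<bar>h * x * y\<bar>" for x y
    using assms by (simp add: abs_mult mult_ac flip: real_sqrt_mult)
  then have "\<bar>dinner M h v w\<bar> \<le> (\<Sum>i\<in>{1..M-1}. \<bar>sqrt h * v i\<bar> * \<bar>sqrt h * w i\<bar>)"
    unfolding dinner_def by simp
  also have "\<dots> \<le> L2_set (\<lambda>i. sqrt h * v i) {1..M-1} * L2_set (\<lambda>i. sqrt h * w i) {1..M-1}"
    by (rule L2_set_mult_ineq)
  also have "\<dots> = dnorm M h v * dnorm M h w"
    unfolding dnorm_def L2_set_def using assms by (simp add: power_mult_distrib)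
  finally show ?thesis .
qed

lemma dinner_diff_right:
  "dinner M h v (\<lambda>i. w i - w' i) = dinner M h v w - dinner M h v w'"
  unfolding dinner_def by (simp add: sum_subtractf[symmetric] right_diff_distrib)

lemma D2_dinner:
  "D2 t (\<lambda>m. dinner M h v (\<lambda>i. w i m)) n = dinner M h v (\<lambda>i. D2 t (w i) n)"
proof -
  have "D2 t (\<lambda>m. dinner M h v (\<lambda>i. w i m)) n
      = (\<Sum>k=1..n. \<Sum>i\<in>{1..M-1}. bker t n (n - k) * (h * v i * (w i k - w i (k - 1))))"
    unfolding D2_def dinner_def by (simp add: sum_distrib_left sum_subtractf[symmetric] right_diff_distrib)
  also have "\<dots> = (\<Sum>i\<in>{1..M-1}. \<Sum>k=1..n. bker t n (n - k) * (h * v i * (w i k - w i (k - 1))))"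
    by (rule sum.swap)
  also have "\<dots> = dinner M h v (\<lambda>i. D2 t (w i) n)"
    unfolding D2_def dinner_def by (simp add: sum_distrib_left mult_ac)
  finally show ?thesis .
qed

lemma weakly_singular_dinner:
  fixes v v' v'' v''' :: "nat \<Rightarrow> real \<Rightarrow> real"
  assumes h: "0 \<le> h"
    and cont: "\<And>i. continuous_on {0..T} (v i)"
    and d1: "\<And>i s. s \<in> {0<..T} \<Longrightarrow> (v i has_real_derivative v' i s) (at s within {0<..T})"
    and d2: "\<And>i s. s \<in> {0<..T} \<Longrightarrow> (v' i has_real_derivative v'' i s) (at s within {0<..T})"
    and d3: "\<And>i s. s \<in> {0<..T} \<Longrightarrow> (v'' i has_real_derivative v''' i s) (at s within {0<..T})"
    and b1: "\<And>s. s \<in> {0<..T} \<Longrightarrow> dnorm M h (\<lambda>i. v' i s) \<le> Cb * s powr (\<alpha> - 1)"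
    and b2: "\<And>s. s \<in> {0<..T} \<Longrightarrow> dnorm M h (\<lambda>i. v'' i s) \<le> Cb * s powr (\<alpha> - 2)"
    and b3: "\<And>s. s \<in> {0<..T} \<Longrightarrow> dnorm M h (\<lambda>i. v''' i s) \<le> Cb * s powr (\<alpha> - 3)"
  shows "weakly_singular T \<alpha> (dnorm M h w * Cb)
    (\<lambda>s. dinner M h w (\<lambda>i. v i s)) (\<lambda>s. dinner M h w (\<lambda>i. v' i s))
    (\<lambda>s. dinner M h w (\<lambda>i. v'' i s)) (\<lambda>s. dinner M h w (\<lambda>i. v''' i s))"
proof -
  have bound: "\<bar>dinner M h w y\<bar> \<le> dnorm M h w * Cb * p" if "dnorm M h y \<le> Cb * p" for y p
  proof -
    have "0 \<le> dnorm M h w"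
      using h by (rule dnorm_nonneg)
    then have "dnorm M h w * dnorm M h y \<le> dnorm M h w * (Cb * p)"
      by (rule mult_left_mono[OF that])
    then show ?thesis
      using dinner_abs_le[OF h, of M w y] by (simp add: mult.assoc)
  qed
  show ?thesis
    unfolding weakly_singular_def dinner_def
    using b1 b2 b3 bound[unfolded dinner_def]
    by (auto intro!: continuous_intros cont DERIV_sum DERIV_cmult d1 d2 d3)
qed

lemma dnorm_le_of_scalar_bound:
  fixes v v' v'' v''' :: "nat \<Rightarrow> real \<Rightarrow> real"
  assumes h: "0 \<le> h" and "0 \<le> Cb" "0 \<le> B"
    and cont: "\<And>i. continuous_on {0..T} (v i)"
    and d1: "\<And>i s. s \<in> {0<..T} \<Longrightarrow> (v i has_real_derivative v' i s) (at s within {0<..T})"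
    and d2: "\<And>i s. s \<in> {0<..T} \<Longrightarrow> (v' i has_real_derivative v'' i s) (at s within {0<..T})"
    and d3: "\<And>i s. s \<in> {0<..T} \<Longrightarrow> (v'' i has_real_derivative v''' i s) (at s within {0<..T})"
    and b1: "\<And>s. s \<in> {0<..T} \<Longrightarrow> dnorm M h (\<lambda>i. v' i s) \<le> Cb * s powr (\<alpha> - 1)"
    and b2: "\<And>s. s \<in> {0<..T} \<Longrightarrow> dnorm M h (\<lambda>i. v'' i s) \<le> Cb * s powr (\<alpha> - 2)"
    and b3: "\<And>s. s \<in> {0<..T} \<Longrightarrow> dnorm M h (\<lambda>i. v''' i s) \<le> Cb * s powr (\<alpha> - 3)"
    and scalar: "\<And>C U U1 U2 U3. weakly_singular T \<alpha> C U U1 U2 U3 \<Longrightarrow>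
      \<bar>D2 t (\<lambda>m. U (t m)) n - U1 (t n)\<bar> \<le> C * B"
  shows "dnorm M h (\<lambda>i. D2 t (\<lambda>m. v i (t m)) n - v' i (t n)) \<le> Cb * B"
proof -
  define E where "E = (\<lambda>i. D2 t (\<lambda>m. v i (t m)) n - v' i (t n))"
  have "(dnorm M h E)\<^sup>2 = dinner M h E E"
    using dinner_self[OF h] by simp
  also have "\<dots> = dinner M h E (\<lambda>i. D2 t (\<lambda>m. v i (t m)) n - v' i (t n))"
    by (simp add: E_def)
  also have "\<dots> = D2 t (\<lambda>m. dinner M h E (\<lambda>i. v i (t m))) n - dinner M h E (\<lambda>i. v' i (t n))"
    unfolding dinner_diff_right D2_dinner ..
  also have "\<dots> \<le> dnorm M h E * (Cb * B)"
    using scalar[OF weakly_singular_dinner[OF h cont d1 d2 d3 b1 b2 b3, where w = E]]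
    by (simp add: mult.assoc abs_le_iff)
  finally have "(dnorm M h E)\<^sup>2 \<le> dnorm M h E * (Cb * B)" .
  moreover have "0 \<le> dnorm M h E" "0 \<le> Cb * B"
    using dnorm_nonneg[OF h] assms(2,3) by simp_all
  ultimately show ?thesis
    unfolding E_def[symmetric] by (metis mult_le_cancel_left order.trans power2_eq_square not_le)
qed

lemma mesh_less:
  fixes t :: "nat \<Rightarrow> real"
  assumes "\<And>k. 1 \<le> k \<Longrightarrow> k \<le> N \<Longrightarrow> t (k - 1) < t k" and "m < k" "k \<le> N"
  shows "t m < t k"
proof (rule lift_Suc_mono_less_ivl[of "{..<N}"])
  show "t n < t (Suc n)" if "n \<in> {..<N}" for n
    using assms(1)[of "Suc n"] that by simp
qed (use assms(2,3) in auto)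

lemma D2_1: "D2 t v 1 = (v 1 - v 0) / tau t 1"
  unfolding D2_def bker_def by simp

lemma D2_eq_bdf2:
  assumes "2 \<le> n"
  shows "D2 t v n = (1 + 2 * ratio t n) / (tau t n * (1 + ratio t n)) * (v n - v (n - 1))
    - (ratio t n)\<^sup>2 / (tau t n * (1 + ratio t n)) * (v (n - 1) - v (n - 2))"
proof -
  obtain m where n: "n = Suc (Suc m)"
    using assms by (metis add_2_eq_Suc le_Suc_ex)
  have "(\<Sum>k=1..m. bker t n (n - k) * (v k - v (k - 1))) = 0"
    by (rule sum.neutral) (auto simp: bker_def n)
  then show ?thesis
    unfolding D2_def n by (simp add: bker_def)
qed

lemma D2_truncation_error_1:
  assumes ws: "weakly_singular T \<alpha> C U U1 U2 U3" and "0 < \<alpha>"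
    and t: "t 0 = 0" "0 < t 1" "t 1 \<le> T"
  shows "\<bar>D2 t (\<lambda>m. U (t m)) 1 - U1 (t 1)\<bar> \<le> C * (tau t 1 powr (\<alpha> - 1) / \<alpha>)"
proof -
  have "D2 t (\<lambda>m. U (t m)) 1 - U1 (t 1) = (U (t 1) - U 0 - t 1 * U1 (t 1)) / t 1"
    unfolding D2_1 tau_def using t by (simp add: field_simps)
  then have "\<bar>D2 t (\<lambda>m. U (t m)) 1 - U1 (t 1)\<bar> = \<bar>U (t 1) - U 0 - t 1 * U1 (t 1)\<bar> / t 1"
    using t(2) by simp
  also have "\<dots> \<le> C / \<alpha> * t 1 powr \<alpha> / t 1"
    by (rule divide_right_mono[OF weakly_singular_taylor1_bound_at_0[OF ws \<open>0 < \<alpha>\<close> t(2,3)]])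
      (use t(2) in simp)
  also have "\<dots> = C * (tau t 1 powr (\<alpha> - 1) / \<alpha>)"
    using t by (simp add: tau_def powr_diff)
  finally show ?thesis .
qed

lemma D2_truncation_error_2:
  assumes ws: "weakly_singular T \<alpha> C U U1 U2 U3" and \<alpha>: "1/2 \<le> \<alpha>" "\<alpha> \<le> 1"
    and t: "t 0 = 0" "0 < t 1" "t 1 < t 2" "t 2 \<le> T"
  shows "\<bar>D2 t (\<lambda>m. U (t m)) 2 - U1 (t 2)\<bar>
    \<le> C * ((2 * (ratio t 2)\<^sup>2 + 1 / (2 * \<alpha>)) * tau t 1 powr (\<alpha> - 1))"
  using bdf2_first_step_bound[OF ws \<alpha> t(2-4)] t(1) by (simp add: D2_eq_bdf2 tau_def ratio_def)

lemma D2_truncation_error: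
  assumes ws: "weakly_singular T \<alpha> C U U1 U2 U3" and \<alpha>: "\<alpha> \<le> 1" and "2 \<le> n"
    and t: "0 < t (n - 2)" "t (n - 2) < t (n - 1)" "t (n - 1) < t n" "t n \<le> T"
  shows "\<bar>D2 t (\<lambda>m. U (t m)) n - U1 (t n)\<bar>
    \<le> C * (2 * (tau t n)\<^sup>2 * t (n - 1) powr (\<alpha> - 3) + 1/2 * (tau t (n - 1))\<^sup>2 * t (n - 2) powr (\<alpha> - 3))"
proof -
  have "n - 1 - 1 = n - 2"
    by simp
  then show ?thesis
    using bdf2_step_bound[OF ws \<alpha> t] \<open>2 \<le> n\<close> by (simp add: D2_eq_bdf2 tau_def ratio_def)
qed

theorem mainTheorem10:
  fixes t :: "nat \<Rightarrow> real" and N :: nat and T :: real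
    and M :: nat and h :: real and x :: "nat \<Rightarrow> real"
    and u u1 u2 u3 :: "real \<Rightarrow> real \<Rightarrow> real"
    and Cb \<alpha> :: real
  assumes N: "N \<ge> 1"
    and t0: "t 0 = 0" and tN: "t N = T"
    and mesh: "\<And>k. 1 \<le> k \<Longrightarrow> k \<le> N \<Longrightarrow> t (k - 1) < t k"
    and h: "h > 0"
    and Cb: "Cb > 0" and \<alpha>: "1/2 \<le> \<alpha>" "\<alpha> \<le> 1"
    and cont: "\<And>i. continuous_on {0..T} (u (x i))"
    and d1: "\<And>i s. s \<in> {0<..T} \<Longrightarrow> (u (x i) has_real_derivative u1 (x i) s) (at s within {0<..T})"
    and d2: "\<And>i s. s \<in> {0<..T} \<Longrightarrow> (u1 (x i) has_real_derivative u2 (x i) s) (at s within {0<..T})"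
    and d3: "\<And>i s. s \<in> {0<..T} \<Longrightarrow> (u2 (x i) has_real_derivative u3 (x i) s) (at s within {0<..T})"
    and b1: "\<And>s. s \<in> {0<..T} \<Longrightarrow> dnorm M h (\<lambda>i. u1 (x i) s) \<le> Cb * s powr (\<alpha> - 1)"
    and b2: "\<And>s. s \<in> {0<..T} \<Longrightarrow> dnorm M h (\<lambda>i. u2 (x i) s) \<le> Cb * s powr (\<alpha> - 2)"
    and b3: "\<And>s. s \<in> {0<..T} \<Longrightarrow> dnorm M h (\<lambda>i. u3 (x i) s) \<le> Cb * s powr (\<alpha> - 3)"
  defines "eta \<equiv> \<lambda>n i. D2 t (\<lambda>m. u (x i) (t m)) n - u1 (x i) (t n)"
  shows "(\<forall>j. 3 \<le> j \<and> j \<le> N \<longrightarrow>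
            dnorm M h (eta j) \<le> 2 * Cb * (tau t j)\<^sup>2 * t (j - 1) powr (\<alpha> - 3)
                              + 1/2 * Cb * (tau t (j - 1))\<^sup>2 * t (j - 2) powr (\<alpha> - 3))
       \<and> (2 \<le> N \<longrightarrow>
            dnorm M h (eta 2) \<le> (2 * (ratio t 2)\<^sup>2 + 1 / (2 * \<alpha>)) * Cb * tau t 1 powr (\<alpha> - 1))
       \<and> dnorm M h (eta 1) \<le> Cb / \<alpha> * tau t 1 powr (\<alpha> - 1)"
proof -
  have incr: "t m < t k" if "m < k" "k \<le> N" for m k
    using mesh that by (rule mesh_less)
  have le_T: "t k \<le> T" if "k \<le> N" for k
    using incr[of k N] tN that by (cases "k = N") auto
  have lift: "dnorm M h (eta n) \<le> Cb * B"
    if "0 \<le> B" "\<And>C U U1 U2 U3. weakly_singular T \<alpha> C U U1 U2 U3 \<Longrightarrow>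
      \<bar>D2 t (\<lambda>m. U (t m)) n - U1 (t n)\<bar> \<le> C * B" for n B
    unfolding eta_def
    by (rule dnorm_le_of_scalar_bound[where v = "\<lambda>i. u (x i)" and v' = "\<lambda>i. u1 (x i)"
          and v'' = "\<lambda>i. u2 (x i)" and v''' = "\<lambda>i. u3 (x i)", OF _ _ that(1) cont d1 d2 d3 b1 b2 b3])
      (use h Cb that(2) in auto)
  have "dnorm M h (eta 1) \<le> Cb * (tau t 1 powr (\<alpha> - 1) / \<alpha>)"
    using \<alpha> N t0 incr[of 0 1] le_T[of 1] by (intro lift D2_truncation_error_1) auto
  moreover have "dnorm M h (eta 2) \<le> Cb * ((2 * (ratio t 2)\<^sup>2 + 1 / (2 * \<alpha>)) * tau t 1 powr (\<alpha> - 1))"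
    if "2 \<le> N"
    using \<alpha> that t0 incr[of 0 1] incr[of 1 2] le_T[of 2] by (intro lift D2_truncation_error_2) auto
  moreover have "dnorm M h (eta j) \<le> Cb * (2 * (tau t j)\<^sup>2 * t (j - 1) powr (\<alpha> - 3)
      + 1/2 * (tau t (j - 1))\<^sup>2 * t (j - 2) powr (\<alpha> - 3))" if "3 \<le> j" "j \<le> N" for j
    using \<alpha> that t0 incr[of 0 "j - 2"] incr[of "j - 2" "j - 1"] incr[of "j - 1" j] le_T[of j]
    by (intro lift D2_truncation_error) auto
  ultimately show ?thesis
    by (simp add: algebra_simps)
qed

end
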